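(* Let $\mathcal{T}$ be a finite set and let $\mathbf{p}_0, \mathbf{p}_1, \mathbf{q}$ be probability measures on $\mathcal{T}$. For probability measures $\mathbf{r},\mathbf{s}$ on $\mathcal{T}$ write $\mathbf{h}_{\mathbf{r},\mathbf{s}}(x) = \mathbf{s}(x) - \mathbf{r}(x)$. Let $\sqsubset$ be a strict total order on $\mathcal{T}$ such that $\mathbf{h}_{\mathbf{p}_0,\mathbf{q}}(x) > \mathbf{h}_{\mathbf{p}_0,\mathbf{q}}(x')$ implies $x \sqsubset x'$, and $\mathbf{h}_{\mathbf{p}_0,\mathbf{q}}(x) < \mathbf{h}_{\mathbf{p}_0,\mathbf{q}}(x')$ implies $x' \sqsubset x$. Suppose further that whenever $\mathbf{h}_{\mathbf{p}_0,\mathbf{p}_1}(x) > 0$ and $\mathbf{h}_{\mathbf{p}_0,\mathbf{p}_1}(y) \le 0$, we have $x \sqsubset y$. For a probability measure $\mathbf{p}$ on $\mathcal{T}$, let $X_\mathbf{p} \sim \mathbf{p}$ and $Y_\mathbf{q} \sim \mathbf{q}$ be independent and define $R_{\mathbf{p},\mathbf{q}}$ to be $0$ if $Y_\mathbf{q} \sqsubset X_\mathbf{p}$, $1$ if $X_\mathbf{p} \sqsubset Y_\mathbf{q}$, and an independent $\mathrm{Bernoulli}(1/2)$ random variable if $X_\mathbf{p} = Y_\mathbf{q}$. Then $\Pr[R_{\mathbf{p}_0,\mathbf{q}} = 0] \ge \Pr[R_{\mathbf{p}_1,\mathbf{q}} = 0]$. *)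

theory Defs
  imports "HOL-Probability.Probability"
begin

definition hdiff :: "'a pmf \<Rightarrow> 'a pmf \<Rightarrow> 'a \<Rightarrow> real" where
  "hdiff r s x = pmf s x - pmf r x"

definition R_pmf :: "('a \<times> 'a) set \<Rightarrow> 'a pmf \<Rightarrow> 'a pmf \<Rightarrow> nat pmf" where
  "R_pmf ord p q =
     do { x \<leftarrow> p; y \<leftarrow> q;
          if (y, x) \<in> ord then return_pmf 0
          else if (x, y) \<in> ord then return_pmf 1
          else map_pmf (\<lambda>b. if b then 1 else 0) (bernoulli_pmf (1/2)) }"

end

theory Submission
  imports Defs
begin

text \<open>Conditioning on X and Y, Pr[R = 0] is the average of a tie-break weight that is
  monotone along the order in its first argument. Moving mass from p0 to p1 only moves it
  from order-earlier to order-later points, so by an Abel-type comparison against a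
  threshold value that average can only decrease.\<close>

definition R_zero_weight :: "('a \<times> 'a) set \<Rightarrow> 'a \<Rightarrow> 'a \<Rightarrow> real" where
  "R_zero_weight ord x y = (if (y, x) \<in> ord then 1 else if (x, y) \<in> ord then 0 else 1/2)"

lemma pmf_R_pmf_zero:
  assumes "finite T" "set_pmf p \<subseteq> T" "set_pmf q \<subseteq> T"
  shows "pmf (R_pmf ord p q) 0 = (\<Sum>x\<in>T. pmf p x * (\<Sum>y\<in>T. pmf q y * R_zero_weight ord x y))"
proof -
  have coin: "pmf (map_pmf (\<lambda>b. if b then 1 else 0) (bernoulli_pmf (1/2))) (0::nat) = 1/2"
  proof -
    have "{x. \<not> x} = {False}" by auto
    then show ?thesis by (simp add: pmf_map vimage_def measure_pmf_single)
  qed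
  have inner: "pmf (bind_pmf q (\<lambda>y. if (y, x) \<in> ord then return_pmf 0
          else if (x, y) \<in> ord then return_pmf 1
          else map_pmf (\<lambda>b. if b then 1 else 0) (bernoulli_pmf (1/2)))) (0::nat)
        = (\<Sum>y\<in>T. pmf q y * R_zero_weight ord x y)" for x
    unfolding pmf_bind
    by (subst integral_measure_pmf[OF assms(1)])
      (use assms(3) coin in \<open>auto simp: R_zero_weight_def intro!: sum.cong\<close>)
  show ?thesis
    unfolding R_pmf_def pmf_bind
    by (subst integral_measure_pmf[OF assms(1)])
      (use assms(2) in \<open>auto simp: inner[unfolded pmf_bind]\<close>)
qed

lemma R_zero_weight_mono:
  assumes "strict_linear_order_on T ord" "x \<in> T" "x' \<in> T" "y \<in> T" "(x, x') \<in> ord"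
  shows "R_zero_weight ord x y \<le> R_zero_weight ord x' y"
proof -
  have "trans ord" "irrefl ord" "total_on T ord"
    using assms(1) by (auto simp: strict_linear_order_on_def)
  show ?thesis
  proof (cases "(y, x) \<in> ord")
    case True
    with \<open>trans ord\<close> assms(5) have "(y, x') \<in> ord" by (meson transD)
    then show ?thesis by (simp add: R_zero_weight_def)
  next
    case False
    with \<open>irrefl ord\<close> \<open>total_on T ord\<close> assms(2,4,5) have "(x, y) \<in> ord \<or> y = x"
      by (auto simp: total_on_def)
    with False \<open>irrefl ord\<close> assms(5) show ?thesis
      by (auto simp: R_zero_weight_def irrefl_def)
  qed
qed

text \<open>Subtracting a constant c that separates the values of f on the positive part of h
  from those on the rest makes every summand nonpositive, and costs nothing since h sums
  to zero.\<close>

lemma sum_mult_nonpos_if_sign_separated: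
  fixes h f :: "'a \<Rightarrow> real"
  assumes "finite T" "(\<Sum>x\<in>T. h x) = 0"
    and separated: "\<And>x y. x \<in> T \<Longrightarrow> y \<in> T \<Longrightarrow> h x > 0 \<Longrightarrow> h y \<le> 0 \<Longrightarrow> f x \<le> f y"
  shows "(\<Sum>x\<in>T. h x * f x) \<le> 0"
proof -
  define P where "P = {x\<in>T. h x > 0}"
  define c where "c = (if P = {} then Min (f ` T) else Max (f ` P))"
  have "finite P" using assms(1) by (simp add: P_def)
  have summand: "h x * (f x - c) \<le> 0" if "x \<in> T" for x
  proof (cases "h x > 0")
    case True
    then have "f x \<le> c" using \<open>finite P\<close> that by (auto simp: c_def P_def)
    with True show ?thesis by (simp add: mult_nonneg_nonpos)
  next
    case False
    have "c \<le> f x"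
    proof (cases "P = {}")
      case True
      then show ?thesis using that assms(1) by (simp add: c_def)
    next
      case False
      then have "c \<in> f ` P" using \<open>finite P\<close> by (simp add: c_def)
      then obtain x0 where "x0 \<in> P" "c = f x0" by blast
      then show ?thesis using separated[of x0 x] that \<open>\<not> h x > 0\<close> by (simp add: P_def)
    qed
    with False show ?thesis by (simp add: mult_nonpos_nonneg)
  qed
  have "(\<Sum>x\<in>T. h x * f x) = (\<Sum>x\<in>T. h x * (f x - c)) + c * (\<Sum>x\<in>T. h x)"
    by (simp add: algebra_simps sum.distrib sum_distrib_left sum_subtractf)
  also have "\<dots> \<le> 0" using assms(2) summand by (simp add: sum_nonpos)
  finally show ?thesis .
qed

theorem lemmaA17:
  fixes T :: "'a set" and p0 p1 q :: "'a pmf" and ord :: "('a \<times> 'a) set"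
  assumes "finite T"
    and "set_pmf p0 \<subseteq> T" and "set_pmf p1 \<subseteq> T" and "set_pmf q \<subseteq> T"
    and "ord \<subseteq> T \<times> T" and "strict_linear_order_on T ord"
    and "\<And>x x'. x \<in> T \<Longrightarrow> x' \<in> T \<Longrightarrow> hdiff p0 q x > hdiff p0 q x' \<Longrightarrow> (x, x') \<in> ord"
    and "\<And>x x'. x \<in> T \<Longrightarrow> x' \<in> T \<Longrightarrow> hdiff p0 q x < hdiff p0 q x' \<Longrightarrow> (x', x) \<in> ord"
    and "\<And>x y. x \<in> T \<Longrightarrow> y \<in> T \<Longrightarrow> hdiff p0 p1 x > 0 \<Longrightarrow> hdiff p0 p1 y \<le> 0 \<Longrightarrow> (x, y) \<in> ord"
  shows "pmf (R_pmf ord p0 q) 0 \<ge> pmf (R_pmf ord p1 q) 0"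
proof -
  define f where "f x = (\<Sum>y\<in>T. pmf q y * R_zero_weight ord x y)" for x
  have f_mono: "f x \<le> f x'" if "x \<in> T" "x' \<in> T" "(x, x') \<in> ord" for x x'
    unfolding f_def using R_zero_weight_mono[OF assms(6) that(1,2) _ that(3)] assms(4)
    by (intro sum_mono mult_left_mono) auto
  have "(\<Sum>x\<in>T. hdiff p0 p1 x) = 0"
    using sum_pmf_eq_1[OF assms(1,2)] sum_pmf_eq_1[OF assms(1,3)]
    by (simp add: hdiff_def sum_subtractf)
  then have "(\<Sum>x\<in>T. hdiff p0 p1 x * f x) \<le> 0"
    using assms(1,9) f_mono by (intro sum_mult_nonpos_if_sign_separated) auto
  moreover have "(\<Sum>x\<in>T. hdiff p0 p1 x * f x) = (\<Sum>x\<in>T. pmf p1 x * f x) - (\<Sum>x\<in>T. pmf p0 x * f x)"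
    by (simp add: hdiff_def algebra_simps sum_subtractf)
  ultimately show ?thesis
    using pmf_R_pmf_zero[OF assms(1,2,4)] pmf_R_pmf_zero[OF assms(1,3,4)] by (simp add: f_def)
qed

end
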